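(* If $\ell$ is a bisector of a quadrilateral $Q$ in $K^2$, then there is a unique bisector $\ell'$ of $Q$ for which $\{\ell,\ell'\}$ is a $Q$-pair.
   Context: $K$ is a field of characteristic $\neq 2$. Every line $L$ in $K^2$ has an equation $tX-uY+v=0$ normalized so that $t=1$ if $u=0$ and $u=1$ if $u\neq 0$; coefficients denoted $t_L,u_L,v_L$. A quadrilateral $Q=ABA'B'$ consists of four distinct lines $A,B,A',B'$ (sides), not all through one point, with adjacent sides ($A,B$; $B,A'$; $A',B'$; $B',A$) not parallel; opposite sides may be parallel. Vertices: $A\cap B$, $B\cap A'$, $A'\cap B'$, $B'\cap A$ (two may coincide if three sides are concurrent). The centroid is the average of the four vertices. Let $\alpha=t_Au_Bu_{A'}u_{B'}-u_At_Bu_{A'}u_{B'}+u_Au_Bt_{A'}u_{B'}-u_Au_Bu_{A'}t_{B'}$, $\beta=t_Au_Bt_{A'}u_{B'}-u_At_Bu_{A'}t_{B'}$, $\gamma=t_At_Bt_{A'}u_{B'}-t_At_Bu_{A'}t_{B'}+t_Au_Bt_{A'}t_{B'}-u_At_Bt_{A'}t_{B'}$, and $\langle \mathbf v,\mathbf w\rangle_Q=\mathbf v^T\begin{pmatrix}\gamma&-\beta\\-\beta&\alpha\end{pmatrix}\mathbf w$. Lines $\ell_1,\ell_2$ are $Q$-orthogonal if $\langle (u_{\ell_1},t_{\ell_1}),(u_{\ell_2},t_{\ell_2})\rangle_Q=0$. A line $\ell$ crosses a pair $\{\ell_1,\ell_2\}$ if distinct from both and not parallel to both; $\mathrm{mid}_{\{\ell_1,\ell_2\}}(\ell)$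 is the midpoint of the points where $\ell$ meets $\ell_1,\ell_2$ (the point at infinity of $\ell$ if one is at infinity). $\ell$ bisects $Q$ (is a bisector) if $\mathrm{mid}_{\mathsf P}(\ell)$ is the same for all pairs $\mathsf P$ among $\{A,A'\},\{B,B'\}$ that $\ell$ crosses; this common point is the midpoint of the bisector. A pair $\{\ell_1,\ell_2\}$ of bisectors (possibly $\ell_1=\ell_2$) is a $Q$-pair if the midpoint of their midpoints is the centroid of $Q$ and $\ell_1,\ell_2$ are $Q$-orthogonal. *)

theory Defs
  imports Main
begin

(* A line of K^2 is represented by its normalized coefficient triple (t,u,v),
   standing for the equation  t*X - u*Y + v = 0, normalized so that
   t = 1 if u = 0, and u = 1 if u ~= 0. *)
type_synonym 'a line = "'a \<times> 'a \<times> 'a"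

definition tL :: "'a line \<Rightarrow> 'a" where "tL l = fst l"
definition uL :: "'a line \<Rightarrow> 'a" where "uL l = fst (snd l)"
definition vL :: "'a line \<Rightarrow> 'a" where "vL l = snd (snd l)"

definition is_line :: "('a::field) line \<Rightarrow> bool" where
  "is_line l \<longleftrightarrow> (uL l = 0 \<and> tL l = 1) \<or> uL l = 1"

definition on_line :: "('a::field) \<times> 'a \<Rightarrow> 'a line \<Rightarrow> bool" where
  "on_line p l \<longleftrightarrow> tL l * fst p - uL l * snd p + vL l = 0"

definition parallel :: "('a::field) line \<Rightarrow> 'a line \<Rightarrow> bool" where
  "parallel l1 l2 \<longleftrightarrow> tL l1 * uL l2 = uL l1 * tL l2"

definition meet :: "('a::field) line \<Rightarrow> 'a line \<Rightarrow> 'a \<times> 'a" where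
  "meet l1 l2 = (THE p. on_line p l1 \<and> on_line p l2)"

definition midpt :: "('a::field) \<times> 'a \<Rightarrow> 'a \<times> 'a \<Rightarrow> 'a \<times> 'a" where
  "midpt p q = ((fst p + fst q) / 2, (snd p + snd q) / 2)"

type_synonym 'a quad = "'a line \<times> 'a line \<times> 'a line \<times> 'a line"

definition quadrilateral :: "('a::field) quad \<Rightarrow> bool" where
  "quadrilateral Q \<longleftrightarrow> (case Q of (A, B, A', B') \<Rightarrow>
     is_line A \<and> is_line B \<and> is_line A' \<and> is_line B' \<and>
     distinct [A, B, A', B'] \<and>
     \<not> (\<exists>p. on_line p A \<and> on_line p B \<and> on_line p A' \<and> on_line p B') \<and>
     \<not> parallel A B \<and> \<not> parallel B A' \<and> \<not> parallel A' B' \<and> \<not> parallel B' A)"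

definition centroid :: "('a::field) quad \<Rightarrow> 'a \<times> 'a" where
  "centroid Q = (case Q of (A, B, A', B') \<Rightarrow>
     let P1 = meet A B; P2 = meet B A'; P3 = meet A' B'; P4 = meet B' A in
     ((fst P1 + fst P2 + fst P3 + fst P4) / 4, (snd P1 + snd P2 + snd P3 + snd P4) / 4))"

definition qalpha :: "('a::field) quad \<Rightarrow> 'a" where
  "qalpha Q = (case Q of (A, B, A', B') \<Rightarrow>
      tL A * uL B * uL A' * uL B' - uL A * tL B * uL A' * uL B'
    + uL A * uL B * tL A' * uL B' - uL A * uL B * uL A' * tL B')"

definition qbeta :: "('a::field) quad \<Rightarrow> 'a" where
  "qbeta Q = (case Q of (A, B, A', B') \<Rightarrow>
      tL A * uL B * tL A' * uL B' - uL A * tL B * uL A' * tL B')"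

definition qgamma :: "('a::field) quad \<Rightarrow> 'a" where
  "qgamma Q = (case Q of (A, B, A', B') \<Rightarrow>
      tL A * tL B * tL A' * uL B' - tL A * tL B * uL A' * tL B'
    + tL A * uL B * tL A' * tL B' - uL A * tL B * tL A' * tL B')"

definition qinner :: "('a::field) quad \<Rightarrow> 'a \<times> 'a \<Rightarrow> 'a \<times> 'a \<Rightarrow> 'a" where
  "qinner Q v w =
     fst v * (qgamma Q * fst w - qbeta Q * snd w) + snd v * (- qbeta Q * fst w + qalpha Q * snd w)"

definition q_orthogonal :: "('a::field) quad \<Rightarrow> 'a line \<Rightarrow> 'a line \<Rightarrow> bool" where
  "q_orthogonal Q l1 l2 \<longleftrightarrow> qinner Q (uL l1, tL l1) (uL l2, tL l2) = 0"

(* Extended points: affine points, and points at infinity given by a direction *)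
datatype 'a xpt = Fin "'a \<times> 'a" | Infty "'a \<times> 'a"

definition inf_pt :: "('a::field) line \<Rightarrow> 'a xpt" where
  "inf_pt l = Infty (uL l, tL l)"

definition crosses :: "('a::field) line \<Rightarrow> 'a line \<Rightarrow> 'a line \<Rightarrow> bool" where
  "crosses l l1 l2 \<longleftrightarrow> l \<noteq> l1 \<and> l \<noteq> l2 \<and> \<not> (parallel l l1 \<and> parallel l l2)"

definition mid :: "('a::field) line \<Rightarrow> 'a line \<Rightarrow> 'a line \<Rightarrow> 'a xpt" where
  "mid l1 l2 l = (if parallel l l1 \<or> parallel l l2 then inf_pt l
                  else Fin (midpt (meet l l1) (meet l l2)))"

definition bisector :: "('a::field) quad \<Rightarrow> 'a line \<Rightarrow> bool" where
  "bisector Q l \<longleftrightarrow> is_line l \<and> (case Q of (A, B, A', B') \<Rightarrow>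
     (crosses l A A' \<and> crosses l B B' \<longrightarrow> mid A A' l = mid B B' l))"

(* midpoint of a bisector: mid over a pair it crosses (every line crosses at least one
   pair of opposite sides of a quadrilateral) *)
definition bis_mid :: "('a::field) quad \<Rightarrow> 'a line \<Rightarrow> 'a xpt" where
  "bis_mid Q l = (case Q of (A, B, A', B') \<Rightarrow>
     (if crosses l A A' then mid A A' l else mid B B' l))"

definition Q_pair :: "('a::field) quad \<Rightarrow> 'a line \<Rightarrow> 'a line \<Rightarrow> bool" where
  "Q_pair Q l1 l2 \<longleftrightarrow> bisector Q l1 \<and> bisector Q l2 \<and>
     (\<exists>m1 m2. bis_mid Q l1 = Fin m1 \<and> bis_mid Q l2 = Fin m2 \<and> midpt m1 m2 = centroid Q) \<and>
     q_orthogonal Q l1 l2"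

end

theory Submission
  imports Defs "HOL-Library.Product_Plus"
begin

(* A line of direction d with midpoint m bisects Q iff m lies on the two midlines of direction d,
   the loci of midpoints of chords of direction d between A, A' and between B, B'. Hence the
   midpoint of the bisector of direction d is the intersection of these midlines; in homogeneous
   coordinates it is a quadratic form N(d) in d, of weight 2 <d, d>_Q.

   The directions Q-orthogonal to d are the multiples of d' = (beta u - alpha t, gamma u - beta t).
   Substituting d' into a binary quadratic form gives its apolar invariant times <d, d>_Q minus
   det_Q = alpha gamma - beta^2 times its value at d, and the apolar invariants of the components
   of N are 4 det_Q times those of the centroid c. Therefore N(d') is det_Q times the reflection of
   N(d) in c: the midpoints of the bisectors of directions d and d' are symmetric about c.

   If d is Q-isotropic, N(d) = 0 and d' is parallel to d. Polarising at d the identity expressing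
   that N lies on a midline shows that c itself lies on both midlines of direction d, so the
   reflected midpoint does as well.

   In both cases the line of direction d' through 2c - m is a bisector with midpoint 2c - m, and
   it is the only line with these properties. *)

section \<open>Lines, directions and intersection points\<close>

definition line_dir :: "('a::field) line \<Rightarrow> 'a \<times> 'a" where
  "line_dir l = (uL l, tL l)"

definition line_eval :: "('a::field) line \<Rightarrow> 'a \<times> 'a \<Rightarrow> 'a" where
  "line_eval L p = tL L * fst p - uL L * snd p + vL L"

definition line_lin :: "('a::field) line \<Rightarrow> 'a \<times> 'a \<Rightarrow> 'a" where
  "line_lin L d = tL L * fst d - uL L * snd d"

definition det2 :: "('a::field) \<times> 'a \<Rightarrow> 'a \<times> 'a \<Rightarrow> 'a" where
  "det2 a b = fst a * snd b - snd a * fst b"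

definition cross :: "('a::field) line \<Rightarrow> 'a line \<Rightarrow> 'a" where
  "cross L1 L2 = tL L1 * uL L2 - uL L1 * tL L2"

(* Homogeneous coordinates (x, y, w) of the intersection point, which is (x / w, y / w) when w \<noteq> 0. *)
definition hmeet :: "('a::field) line \<Rightarrow> 'a line \<Rightarrow> 'a \<times> 'a \<times> 'a" where
  "hmeet L1 L2 = (uL L1 * vL L2 - vL L1 * uL L2, tL L1 * vL L2 - vL L1 * tL L2, cross L1 L2)"

lemma line_coeffs [simp]: "tL (t, u, v) = t" "uL (t, u, v) = u" "vL (t, u, v) = v"
  unfolding tL_def uL_def vL_def by simp_all

lemma on_line_iff_line_eval: "on_line p L \<longleftrightarrow> line_eval L p = 0"
  unfolding on_line_def line_eval_def by simp

lemma parallel_iff_cross: "parallel L1 L2 \<longleftrightarrow> cross L1 L2 = 0"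
  unfolding parallel_def cross_def by simp

lemma parallel_iff_det2: "parallel l1 l2 \<longleftrightarrow> det2 (line_dir l1) (line_dir l2) = 0"
  unfolding parallel_def det2_def line_dir_def by (auto simp: algebra_simps)

lemma parallel_iff_line_lin: "parallel l L \<longleftrightarrow> line_lin L (line_dir l) = 0"
  unfolding parallel_def line_lin_def line_dir_def by (auto simp: algebra_simps)

lemma line_lin_line_dir: "line_lin l (line_dir l) = 0"
  unfolding line_lin_def line_dir_def by (simp add: mult.commute)

lemma parallel_refl: "parallel l l"
  unfolding parallel_def by (simp add: mult.commute)

lemma parallel_sym: "parallel l1 l2 \<longleftrightarrow> parallel l2 l1"
  unfolding parallel_def by (auto simp: mult.commute)

lemma line_dir_nonzero: "is_line l \<Longrightarrow> line_dir l \<noteq> 0"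
  unfolding is_line_def line_dir_def by (auto simp: prod_eq_iff)

lemma det2_swap: "det2 b a = - det2 a b"
  unfolding det2_def by simp

lemma det2_trans:
  assumes "det2 a r = 0" "det2 r b = 0" "r \<noteq> 0"
  shows "det2 a b = 0"
proof -
  have "fst r * det2 a b = 0" "snd r * det2 a b = 0"
    using assms(1,2) unfolding det2_def by algebra+
  then show ?thesis using assms(3) by (auto simp: prod_eq_iff)
qed

lemma parallel_trans:
  assumes "is_line l" "parallel X l" "parallel l Y"
  shows "parallel X Y"
  using assms det2_trans line_dir_nonzero unfolding parallel_iff_det2 by blast

lemma parallel_common_point_eq:
  assumes "is_line l" "is_line L" "parallel l L" "on_line p l" "on_line p L"
  shows "l = L"
proof -
  have "tL l = tL L \<and> uL l = uL L"
    using assms(1-3) unfolding is_line_def parallel_def by auto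
  moreover then have "vL l = vL L"
    using assms(4,5) unfolding on_line_def by (metis add_left_cancel)
  ultimately show ?thesis
    unfolding tL_def uL_def vL_def by (simp add: prod_eq_iff)
qed

lemma hmeet_incident:
  assumes "hmeet L1 L2 = (x, y, w)"
  shows "tL L1 * x - uL L1 * y + vL L1 * w = 0" "tL L2 * x - uL L2 * y + vL L2 * w = 0"
proof -
  have "x = uL L1 * vL L2 - vL L1 * uL L2" "y = tL L1 * vL L2 - vL L1 * tL L2"
    "w = tL L1 * uL L2 - uL L1 * tL L2"
    using assms unfolding hmeet_def cross_def by auto
  then show "tL L1 * x - uL L1 * y + vL L1 * w = 0" "tL L2 * x - uL L2 * y + vL L2 * w = 0"
    by algebra+
qed

lemma hmeet_common_point:
  assumes "on_line p L1" "on_line p L2"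
  shows "hmeet L1 L2 = (cross L1 L2 * fst p, cross L1 L2 * snd p, cross L1 L2)"
proof -
  have "vL L1 = uL L1 * snd p - tL L1 * fst p" "vL L2 = uL L2 * snd p - tL L2 * fst p"
    using assms unfolding on_line_def by (simp_all add: algebra_simps)
  then show ?thesis
    unfolding hmeet_def cross_def prod_eq_iff fst_conv snd_conv by algebra
qed

lemma on_line_hmeet:
  assumes "hmeet L1 L2 = (k * fst p, k * snd p, k)" "k \<noteq> 0"
  shows "on_line p L1" "on_line p L2"
proof -
  have "k * line_eval L1 p = 0" "k * line_eval L2 p = 0"
    using hmeet_incident[OF assms(1)] unfolding line_eval_def by (simp_all add: algebra_simps)
  then show "on_line p L1" "on_line p L2"
    using assms(2) by (simp_all add: on_line_iff_line_eval)
qed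

lemma meet_hmeet:
  assumes "\<not> parallel L1 L2" "hmeet L1 L2 = (x, y, w)"
  shows "meet L1 L2 = (x / w, y / w)"
  unfolding meet_def
proof (rule the_equality)
  have w: "w = cross L1 L2" "w \<noteq> 0"
    using assms unfolding hmeet_def parallel_iff_cross by auto
  then have "hmeet L1 L2 = (w * fst (x / w, y / w), w * snd (x / w, y / w), w)"
    using assms(2) by simp
  then show "on_line (x / w, y / w) L1 \<and> on_line (x / w, y / w) L2"
    using on_line_hmeet w(2) by blast
  fix p assume "on_line p L1 \<and> on_line p L2"
  then have "(x, y, w) = (w * fst p, w * snd p, w)"
    using hmeet_common_point assms(2) w(1) by metis
  then show "p = (x / w, y / w)"
    using w(2) by (auto simp: prod_eq_iff)
qed

lemma meet_eqI:
  assumes "\<not> parallel L1 L2" "on_line p L1" "on_line p L2"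
  shows "meet L1 L2 = p"
proof -
  have "cross L1 L2 \<noteq> 0" using assms(1) parallel_iff_cross by blast
  then show ?thesis
    using meet_hmeet[OF assms(1) hmeet_common_point[OF assms(2,3)]] by (simp add: prod_eq_iff)
qed

lemma meet_on_line:
  assumes "\<not> parallel L1 L2"
  shows "on_line (meet L1 L2) L1" "on_line (meet L1 L2) L2"
proof -
  obtain x y w where h: "hmeet L1 L2 = (x, y, w)" by (cases "hmeet L1 L2") auto
  then have "w \<noteq> 0" using assms unfolding hmeet_def parallel_iff_cross by auto
  then have "hmeet L1 L2 = (w * fst (meet L1 L2), w * snd (meet L1 L2), w)"
    using h meet_hmeet[OF assms h] by simp
  then show "on_line (meet L1 L2) L1" "on_line (meet L1 L2) L2"
    using on_line_hmeet \<open>w \<noteq> 0\<close> by blast+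
qed

lemma line_eval_midpt:
  "(2::'a::field) \<noteq> 0 \<Longrightarrow> line_eval L (midpt p q) = (line_eval L p + line_eval L q) / (2::'a)"
proof -
  assume two: "(2::'a) \<noteq> 0"
  have "2 * fst (midpt p q) = fst p + fst q" "2 * snd (midpt p q) = snd p + snd q"
    unfolding midpt_def using two by simp_all
  then have "line_eval L (midpt p q) * 2 = line_eval L p + line_eval L q"
    unfolding line_eval_def by algebra
  then show ?thesis using two by (simp add: eq_divide_eq)
qed

lemma meet_along:
  assumes "\<not> parallel l L" "on_line m l"
  shows "meet l L = (fst m - line_eval L m / line_lin L (line_dir l) * uL l,
                     snd m - line_eval L m / line_lin L (line_dir l) * tL l)"
proof (rule meet_eqI[OF assms(1)])
  define s where "s = line_eval L m / line_lin L (line_dir l)"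
  have "line_lin L (line_dir l) \<noteq> 0" using assms(1) parallel_iff_line_lin by blast
  then have "line_eval L m - s * line_lin L (line_dir l) = 0" unfolding s_def by simp
  then show "on_line (fst m - s * uL l, snd m - s * tL l) L"
    unfolding on_line_def line_eval_def line_lin_def line_dir_def by (simp add: algebra_simps)
  show "on_line (fst m - s * uL l, snd m - s * tL l) l"
    using assms(2) unfolding on_line_def by (simp add: algebra_simps)
qed

section \<open>Midlines and the bisector condition\<close>

(* Not a normalised line: its points are the midpoints of the chords of direction d between L1 and
   L2, and it degenerates to (0, 0, 0) when d is parallel to both. *)
definition midline :: "('a::field) line \<Rightarrow> 'a line \<Rightarrow> 'a \<times> 'a \<Rightarrow> 'a line" where
  "midline L1 L2 d = (line_lin L2 d * tL L1 + line_lin L1 d * tL L2,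
                      line_lin L2 d * uL L1 + line_lin L1 d * uL L2,
                      line_lin L2 d * vL L1 + line_lin L1 d * vL L2)"

lemma line_eval_midline:
  "line_eval (midline L1 L2 d) m = line_lin L2 d * line_eval L1 m + line_lin L1 d * line_eval L2 m"
  unfolding midline_def line_eval_def by (simp add: algebra_simps)

lemma midline_sym: "midline L1 L2 d = midline L2 L1 d"
  unfolding midline_def by (simp add: add.commute)

lemma midpt_meet_iff:
  fixes l :: "('a::field) line"
  assumes two: "(2::'a) \<noteq> 0" and l: "is_line l"
    and n1: "\<not> parallel l L1" and n2: "\<not> parallel l L2"
  shows "midpt (meet l L1) (meet l L2) = m \<longleftrightarrow> on_line m l \<and> on_line m (midline L1 L2 (line_dir l))"
proof -
  let ?d = "line_dir l"
  have D: "line_lin L1 ?d \<noteq> 0" "line_lin L2 ?d \<noteq> 0"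
    using n1 n2 parallel_iff_line_lin by blast+
  have "on_line (midpt (meet l L1) (meet l L2)) l"
    using meet_on_line(1)[OF n1] meet_on_line(1)[OF n2]
    by (simp add: on_line_iff_line_eval line_eval_midpt[OF two])
  moreover have "midpt (meet l L1) (meet l L2) = m \<longleftrightarrow> on_line m (midline L1 L2 ?d)"
    if m: "on_line m l"
  proof -
    define s1 where "s1 = line_eval L1 m / line_lin L1 ?d"
    define s2 where "s2 = line_eval L2 m / line_lin L2 ?d"
    have "midpt (meet l L1) (meet l L2) = (fst m - (s1 + s2) / 2 * uL l, snd m - (s1 + s2) / 2 * tL l)"
      unfolding meet_along[OF n1 m] meet_along[OF n2 m] s1_def s2_def midpt_def
      using two by (simp add: field_simps)
    moreover have "uL l \<noteq> 0 \<or> tL l \<noteq> 0"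
      using line_dir_nonzero[OF l] unfolding line_dir_def by (auto simp: prod_eq_iff)
    ultimately have "midpt (meet l L1) (meet l L2) = m \<longleftrightarrow> s1 + s2 = 0"
      using two by (auto simp: prod_eq_iff)
    moreover have "line_eval (midline L1 L2 ?d) m = line_lin L1 ?d * line_lin L2 ?d * (s1 + s2)"
      unfolding line_eval_midline s1_def s2_def using D by (simp add: field_simps)
    ultimately show ?thesis
      using D by (simp add: on_line_iff_line_eval)
  qed
  ultimately show ?thesis by blast
qed

lemma mid_eq_Fin_iff:
  fixes l :: "('a::field) line"
  assumes "(2::'a) \<noteq> 0" "is_line l"
  shows "mid L1 L2 l = Fin m \<longleftrightarrow> \<not> parallel l L1 \<and> \<not> parallel l L2 \<and>
           on_line m l \<and> on_line m (midline L1 L2 (line_dir l))"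
  using midpt_meet_iff[OF assms] unfolding mid_def inf_pt_def by auto

lemma midline_parallel_side:
  assumes "is_line l" "is_line L1" "parallel l L1" "\<not> parallel l L2"
    and "on_line m l" "on_line m (midline L1 L2 (line_dir l))"
  shows "l = L1"
proof -
  have "line_eval L1 m = 0"
    using assms(3,4,6) unfolding on_line_iff_line_eval line_eval_midline parallel_iff_line_lin by simp
  then show ?thesis
    using parallel_common_point_eq[OF assms(1-3,5)] by (simp add: on_line_iff_line_eval)
qed

lemma crossed_pair_midline:
  fixes l :: "('a::field) line"
  assumes two: "(2::'a) \<noteq> 0" and l: "is_line l" and "is_line L1" "is_line L2"
    and cr: "crosses l L1 L2" and m: "on_line m l"
  shows "mid L1 L2 l = Fin m \<longleftrightarrow> on_line m (midline L1 L2 (line_dir l))"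
proof
  assume M: "on_line m (midline L1 L2 (line_dir l))"
  have "\<not> parallel l L1" "\<not> parallel l L2"
    using midline_parallel_side[OF l \<open>is_line L1\<close> _ _ m] midline_parallel_side[OF l \<open>is_line L2\<close> _ _ m]
      M midline_sym cr unfolding crosses_def by metis+
  then show "mid L1 L2 l = Fin m" using M m mid_eq_Fin_iff[OF two l] by blast
qed (use mid_eq_Fin_iff[OF two l] in blast)

lemma uncrossed_pair_midline:
  assumes "\<not> crosses l L1 L2" "on_line m l"
  shows "on_line m (midline L1 L2 (line_dir l))"
  using assms line_lin_line_dir[of l]
  unfolding crosses_def on_line_iff_line_eval line_eval_midline parallel_iff_line_lin by auto

lemma quadrilateral_parallel_adjacent:
  assumes "quadrilateral (A, B, A', B')" "is_line l" "parallel l A \<or> parallel l A'"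
  shows "\<not> parallel l B \<and> \<not> parallel l B'"
  using assms parallel_trans[OF assms(2)] parallel_sym unfolding quadrilateral_def by fast

lemma quadrilateral_crosses:
  assumes "quadrilateral (A, B, A', B')" "is_line l"
  shows "crosses l A A' \<or> crosses l B B'"
  using quadrilateral_parallel_adjacent[OF assms] parallel_refl unfolding crosses_def by metis

definition on_midlines :: "('a::field) quad \<Rightarrow> 'a \<times> 'a \<Rightarrow> 'a \<times> 'a \<Rightarrow> bool" where
  "on_midlines Q d m \<longleftrightarrow>
     (case Q of (A, B, A', B') \<Rightarrow> on_line m (midline A A' d) \<and> on_line m (midline B B' d))"

lemma on_midlines_quad:
  "on_midlines (A, B, A', B') d m \<longleftrightarrow> on_line m (midline A A' d) \<and> on_line m (midline B B' d)"
  unfolding on_midlines_def by simp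

lemma bisector_midpoint_iff:
  fixes Q :: "('a::field) quad"
  assumes two: "(2::'a) \<noteq> 0" and Q: "quadrilateral Q" and l: "is_line l"
  shows "bisector Q l \<and> bis_mid Q l = Fin m \<longleftrightarrow> on_line m l \<and> on_midlines Q (line_dir l) m"
proof -
  obtain A B A' B' where Q_eq: "Q = (A, B, A', B')" by (cases Q) auto
  have lines: "is_line A" "is_line B" "is_line A'" "is_line B'"
    using Q unfolding Q_eq quadrilateral_def by auto
  have cr: "crosses l A A' \<or> crosses l B B'"
    using quadrilateral_crosses Q l unfolding Q_eq by blast
  have on_l: "mid L1 L2 l = Fin m \<Longrightarrow> on_line m l" for L1 L2
    using mid_eq_Fin_iff[OF two l] by blast
  have "bisector Q l \<and> bis_mid Q l = Fin m \<longleftrightarrow>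
        on_line m l \<and> (crosses l A A' \<longrightarrow> mid A A' l = Fin m) \<and> (crosses l B B' \<longrightarrow> mid B B' l = Fin m)"
    using cr on_l[of A A'] on_l[of B B'] l unfolding Q_eq bisector_def bis_mid_def by auto
  also have "\<dots> \<longleftrightarrow> on_line m l \<and> on_midlines Q (line_dir l) m"
    using crossed_pair_midline[OF two l \<open>is_line A\<close> \<open>is_line A'\<close>, of m]
      crossed_pair_midline[OF two l \<open>is_line B\<close> \<open>is_line B'\<close>, of m]
      uncrossed_pair_midline[of l A A' m] uncrossed_pair_midline[of l B B' m]
    unfolding Q_eq on_midlines_def by auto
  finally show ?thesis .
qed

lemma bisector_midpoint_exists:
  assumes Q: "quadrilateral Q" and b: "bisector Q l"
  shows "\<exists>m. bis_mid Q l = Fin m"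
proof -
  obtain A B A' B' where Q_eq: "Q = (A, B, A', B')" by (cases Q) auto
  have l: "is_line l" using b unfolding bisector_def by simp
  have mid_Fin: "\<exists>m. mid L1 L2 l = Fin m" if "\<not> parallel l L1" "\<not> parallel l L2" for L1 L2
    using that unfolding mid_def by simp
  show ?thesis
  proof (cases "parallel l A \<or> parallel l A'")
    case True
    then have "\<not> parallel l B" "\<not> parallel l B'"
      using quadrilateral_parallel_adjacent Q l unfolding Q_eq by blast+
    moreover then have "crosses l B B'"
      using parallel_refl unfolding crosses_def by metis
    ultimately show ?thesis
      using b mid_Fin unfolding Q_eq bisector_def bis_mid_def by auto
  next
    case False
    then have "crosses l A A'"
      using parallel_refl unfolding crosses_def by metis
    then show ?thesis
      using False mid_Fin unfolding Q_eq bis_mid_def by auto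
  qed
qed

section \<open>Binary forms relative to the quadrilateral\<close>

definition lin_form :: "(('a::field) \<times> 'a \<Rightarrow> 'a) \<Rightarrow> bool" where
  "lin_form f \<longleftrightarrow> (\<exists>a b. \<forall>u t. f (u, t) = a * u + b * t)"

definition quad_form :: "(('a::field) \<times> 'a \<Rightarrow> 'a) \<Rightarrow> bool" where
  "quad_form f \<longleftrightarrow> (\<exists>a b c. \<forall>u t. f (u, t) = a * u\<^sup>2 + b * u * t + c * t\<^sup>2)"

(* For f (u, t) = a u\<^sup>2 + b u t + c t\<^sup>2 this is alpha a + beta b + gamma c, the apolar invariant of f
   and the form d \<mapsto> qinner Q d d. *)
definition apolar :: "('a::field) quad \<Rightarrow> ('a \<times> 'a \<Rightarrow> 'a) \<Rightarrow> 'a" where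
  "apolar Q f = qalpha Q * f (1, 0) + qbeta Q * (f (1, 1) - f (1, 0) - f (0, 1)) + qgamma Q * f (0, 1)"

definition qdet :: "('a::field) quad \<Rightarrow> 'a" where
  "qdet Q = qalpha Q * qgamma Q - (qbeta Q)\<^sup>2"

definition qrot :: "('a::field) quad \<Rightarrow> 'a \<times> 'a \<Rightarrow> 'a \<times> 'a" where
  "qrot Q d = (qbeta Q * fst d - qalpha Q * snd d, qgamma Q * fst d - qbeta Q * snd d)"

lemma lin_formI: "(\<And>u t. f (u, t) = f (1, 0) * u + f (0, 1) * t) \<Longrightarrow> lin_form f"
  unfolding lin_form_def by blast

lemma lin_form_scale:
  assumes "lin_form f"
  shows "lin_form (\<lambda>v. k * f v)"
proof -
  obtain a b where "\<And>u t. f (u, t) = a * u + b * t" using assms unfolding lin_form_def by blast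
  then have "k * f (u, t) = (k * a) * u + (k * b) * t" for u t by (simp add: algebra_simps)
  then show ?thesis unfolding lin_form_def by blast
qed

lemma lin_form_add_diff:
  assumes "lin_form f"
  shows "f (a + b) = f a + f b" "f (a - b) = f a - f b"
  using assms unfolding lin_form_def
  by (cases a; cases b; auto simp: algebra_simps)+

lemma lin_form_det2_zero:
  assumes "lin_form f" "f a = 0" "a \<noteq> 0" "det2 a b = 0"
  shows "f b = 0"
proof -
  obtain p q where f: "\<And>u t. f (u, t) = p * u + q * t" using assms(1) unfolding lin_form_def by blast
  have "fst a * f b = 0" "snd a * f b = 0"
    using assms(2,4) unfolding det2_def f[of "fst b" "snd b", simplified] f[of "fst a" "snd a", simplified]
    by algebra+
  then show ?thesis using assms(3) by (auto simp: prod_eq_iff)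
qed

lemma quad_form_mult_diff:
  assumes "lin_form f1" "lin_form g1" "lin_form f2" "lin_form g2"
  shows "quad_form (\<lambda>d. f1 d * g1 d - f2 d * g2 d)"
proof -
  obtain a1 b1 c1 e1 a2 b2 c2 e2 where
    "\<And>u t. f1 (u, t) = a1 * u + b1 * t" "\<And>u t. g1 (u, t) = c1 * u + e1 * t"
    "\<And>u t. f2 (u, t) = a2 * u + b2 * t" "\<And>u t. g2 (u, t) = c2 * u + e2 * t"
    using assms unfolding lin_form_def by metis
  then have "f1 (u, t) * g1 (u, t) - f2 (u, t) * g2 (u, t) =
      (a1 * c1 - a2 * c2) * u\<^sup>2 + (a1 * e1 + b1 * c1 - a2 * e2 - b2 * c2) * u * t
      + (b1 * e1 - b2 * e2) * t\<^sup>2" for u t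
    by (simp add: algebra_simps power2_eq_square)
  then show ?thesis unfolding quad_form_def by blast
qed

lemma quad_form_diff_scale:
  assumes "quad_form f" "quad_form g"
  shows "quad_form (\<lambda>d. f d - k * g d)"
proof -
  obtain a b c a' b' c' where
    "\<And>u t. f (u, t) = a * u\<^sup>2 + b * u * t + c * t\<^sup>2"
    "\<And>u t. g (u, t) = a' * u\<^sup>2 + b' * u * t + c' * t\<^sup>2"
    using assms unfolding quad_form_def by metis
  then have "f (u, t) - k * g (u, t) =
      (a - k * a') * u\<^sup>2 + (b - k * b') * u * t + (c - k * c') * t\<^sup>2" for u t
    by (simp add: algebra_simps)
  then show ?thesis unfolding quad_form_def by blast
qed

lemma apolar_diff_scale: "apolar Q (\<lambda>d. f d - k * g d) = apolar Q f - k * apolar Q g"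
  unfolding apolar_def by (simp add: algebra_simps)

lemma lin_form_midline:
  "lin_form (\<lambda>d. tL (midline L1 L2 d))" "lin_form (\<lambda>d. uL (midline L1 L2 d))"
  "lin_form (\<lambda>d. vL (midline L1 L2 d))" "lin_form (\<lambda>d. line_eval (midline L1 L2 d) m)"
  by (rule lin_formI; simp add: midline_def line_lin_def line_eval_def algebra_simps)+

lemma quad_form_parallelogram:
  assumes "quad_form f"
  shows "f (a + b) + f (a - b) = 2 * f a + 2 * f b"
  using assms unfolding quad_form_def
  by (cases a; cases b; auto simp: algebra_simps power2_eq_square)

lemma qinner_eq_det2: "qinner Q d h = det2 h (qrot Q d)"
  unfolding qinner_def det2_def qrot_def by (simp add: algebra_simps)

lemma qrot_nonzero:
  assumes "qdet Q \<noteq> 0" "d \<noteq> 0"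
  shows "qrot Q d \<noteq> 0"
proof
  assume "qrot Q d = 0"
  then have "qdet Q * fst d = 0" "qdet Q * snd d = 0"
    unfolding qrot_def qdet_def prod_eq_iff by (simp_all, algebra+)
  then show False using assms by (auto simp: prod_eq_iff)
qed

lemma quad_form_qrot:
  assumes "quad_form f"
  shows "f (qrot Q d) = apolar Q f * qinner Q d d - qdet Q * f d"
  using assms unfolding quad_form_def apolar_def qinner_def qdet_def qrot_def
  by (cases d; auto simp: algebra_simps power2_eq_square)

lemma qinner_qrot_self: "qinner Q (qrot Q d) (qrot Q d) = qdet Q * qinner Q d d"
  unfolding qinner_def qrot_def qdet_def by (simp add: algebra_simps power2_eq_square)

lemma qinner_add_diff_self:
  "qinner Q (a + b) (a + b) = qinner Q a a + 2 * qinner Q a b + qinner Q b b"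
  "qinner Q (a - b) (a - b) = qinner Q a a - 2 * qinner Q a b + qinner Q b b"
  unfolding qinner_def by (simp_all add: algebra_simps)

lemma apolar_polar_identity:
  assumes "quad_form f"
  shows "2 * apolar Q f * (det2 d h)\<^sup>2
    = 2 * qinner Q h h * f d - qinner Q d h * (f (d + h) - f (d - h)) + 2 * qinner Q d d * f h"
  using assms unfolding quad_form_def apolar_def qinner_def det2_def
  by (cases d; cases h; auto simp: algebra_simps power2_eq_square)

lemma qinner_nondegenerate:
  assumes "qdet Q \<noteq> 0" "d \<noteq> 0"
  obtains h where "qinner Q d h \<noteq> 0"
proof -
  have "qrot Q d \<noteq> 0" using qrot_nonzero[OF assms] .
  then have "qinner Q d (1, 0) \<noteq> 0 \<or> qinner Q d (0, 1) \<noteq> 0"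
    unfolding qinner_eq_det2 det2_def by (auto simp: prod_eq_iff)
  then show ?thesis using that by blast
qed

lemma apolar_isotropic_shift:
  fixes f :: "('a::field) \<times> 'a \<Rightarrow> 'a"
  assumes two: "(2::'a) \<noteq> 0" and f: "quad_form f" and "apolar Q f = 0"
    and "qinner Q d d = 0" "f d = 0" "qinner Q d h \<noteq> 0"
  shows "f (d + h) = f h" "f (d - h) = f h"
proof -
  have "qinner Q d h * (f (d + h) - f (d - h)) = 0"
    using apolar_polar_identity[OF f, of Q d h] assms by simp
  then have "f (d + h) = f (d - h)" using assms(6) by simp
  moreover have "f (d + h) + f (d - h) = 2 * f h"
    using quad_form_parallelogram[OF f] assms(5) by simp
  ultimately show "f (d + h) = f h" "f (d - h) = f h" using two by simp_all
qed

lemma isotropic_cubic_root: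
  fixes Q :: "('a::field) quad"
  assumes two: "(2::'a) \<noteq> 0" and det: "qdet Q \<noteq> 0" and d: "d \<noteq> 0" "qinner Q d d = 0"
    and lin: "lin_form e" "lin_form X" "lin_form Y" and quad: "quad_form W" "quad_form Z"
    and apolar: "apolar Q W = 0" "apolar Q Z = 0" and roots: "W d = 0" "Z d = 0"
    and cubic: "\<And>v. qinner Q v v * e v + X v * W v + Y v * Z v = 0"
  shows "e d = 0"
proof -
  obtain h where h: "qinner Q d h \<noteq> 0" using qinner_nondegenerate[OF det d(1)] by blast
  \<comment> \<open>Polarise the cubic at d in direction h; the W- and Z-terms cancel.\<close>
  note W = apolar_isotropic_shift[OF two quad(1) apolar(1) d(2) roots(1) h]
  note Z = apolar_isotropic_shift[OF two quad(2) apolar(2) d(2) roots(2) h]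
  have "2 * (2 * qinner Q d h * e d) =
      (qinner Q (d + h) (d + h) * e (d + h) + X (d + h) * W (d + h) + Y (d + h) * Z (d + h))
    - (qinner Q (d - h) (d - h) * e (d - h) + X (d - h) * W (d - h) + Y (d - h) * Z (d - h))
    - 2 * (qinner Q h h * e h + X h * W h + Y h * Z h)"
    unfolding W Z qinner_add_diff_self d(2) lin_form_add_diff[OF lin(1)]
      lin_form_add_diff[OF lin(2)] lin_form_add_diff[OF lin(3)]
    by (simp add: algebra_simps)
  then have "2 * (2 * qinner Q d h * e d) = 0" unfolding cubic by simp
  then show ?thesis using two h by (simp only: mult_eq_0_iff) blast
qed

section \<open>The midpoint of the bisector of a given direction\<close>

definition midlines_hmeet :: "('a::field) quad \<Rightarrow> 'a \<times> 'a \<Rightarrow> 'a \<times> 'a \<times> 'a" where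
  "midlines_hmeet Q d = (case Q of (A, B, A', B') \<Rightarrow> hmeet (midline A A' d) (midline B B' d))"

lemma midlines_hmeet_quad: "midlines_hmeet (A, B, A', B') d = hmeet (midline A A' d) (midline B B' d)"
  unfolding midlines_hmeet_def by simp

lemma apolar_midlines_hmeet_expand:
  "apolar (A, B, A', B') (\<lambda>d. fst (midlines_hmeet (A, B, A', B') d)) =
     - (fst (hmeet A B) * cross B A' * cross A' B' * cross B' A
      + cross A B * fst (hmeet B A') * cross A' B' * cross B' A
      + cross A B * cross B A' * fst (hmeet A' B') * cross B' A
      + cross A B * cross B A' * cross A' B' * fst (hmeet B' A))"
  "apolar (A, B, A', B') (\<lambda>d. fst (snd (midlines_hmeet (A, B, A', B') d))) =
     - (fst (snd (hmeet A B)) * cross B A' * cross A' B' * cross B' A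
      + cross A B * fst (snd (hmeet B A')) * cross A' B' * cross B' A
      + cross A B * cross B A' * fst (snd (hmeet A' B')) * cross B' A
      + cross A B * cross B A' * cross A' B' * fst (snd (hmeet B' A)))"
  unfolding apolar_def midlines_hmeet_def hmeet_def cross_def midline_def line_lin_def
    qalpha_def qbeta_def qgamma_def
  by (simp_all add: algebra_simps)

lemma qdet_quadrilateral:
  "qdet (A, B, A', B') = - (cross A B * cross B A' * cross A' B' * cross B' A)"
  unfolding qdet_def qalpha_def qbeta_def qgamma_def cross_def
  by (simp add: algebra_simps power2_eq_square)

lemma qdet_nonzero: "quadrilateral Q \<Longrightarrow> qdet Q \<noteq> 0"
  by (cases Q) (auto simp: quadrilateral_def qdet_quadrilateral parallel_iff_cross)

lemma centroid_hmeet: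
  assumes "quadrilateral (A, B, A', B')"
  shows "centroid (A, B, A', B') =
    ((fst (hmeet A B) / cross A B + fst (hmeet B A') / cross B A'
      + fst (hmeet A' B') / cross A' B' + fst (hmeet B' A) / cross B' A) / 4,
     (fst (snd (hmeet A B)) / cross A B + fst (snd (hmeet B A')) / cross B A'
      + fst (snd (hmeet A' B')) / cross A' B' + fst (snd (hmeet B' A)) / cross B' A) / 4)"
proof -
  have meet: "meet P R = (fst (hmeet P R) / cross P R, fst (snd (hmeet P R)) / cross P R)"
    if "\<not> parallel P R" for P R :: "'a line"
    using meet_hmeet[OF that, of "fst (hmeet P R)" "fst (snd (hmeet P R))" "cross P R"]
    by (simp add: hmeet_def)
  show ?thesis
    using assms unfolding quadrilateral_def centroid_def by (simp add: Let_def meet)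
qed

lemma apolar_midlines_hmeet:
  fixes Q :: "('a::field) quad"
  assumes two: "(2::'a) \<noteq> 0" and Q: "quadrilateral Q"
  shows "apolar Q (\<lambda>d. fst (midlines_hmeet Q d)) = 4 * qdet Q * fst (centroid Q)"
    "apolar Q (\<lambda>d. fst (snd (midlines_hmeet Q d))) = 4 * qdet Q * snd (centroid Q)"
proof -
  obtain A B A' B' where Q_eq: "Q = (A, B, A', B')" by (cases Q) auto
  have "cross A B \<noteq> 0" "cross B A' \<noteq> 0" "cross A' B' \<noteq> 0" "cross B' A \<noteq> 0"
    using Q unfolding Q_eq quadrilateral_def parallel_iff_cross by auto
  moreover have "(4::'a) \<noteq> 0" using two by (metis mult_2_right no_zero_divisors numeral_Bit0)
  ultimately show "apolar Q (\<lambda>d. fst (midlines_hmeet Q d)) = 4 * qdet Q * fst (centroid Q)"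
    "apolar Q (\<lambda>d. fst (snd (midlines_hmeet Q d))) = 4 * qdet Q * snd (centroid Q)"
    unfolding Q_eq apolar_midlines_hmeet_expand qdet_quadrilateral centroid_hmeet[OF Q[unfolded Q_eq]]
    by (simp_all add: field_simps)
qed

lemma quad_form_midlines_hmeet:
  "quad_form (\<lambda>d. fst (midlines_hmeet Q d))" "quad_form (\<lambda>d. fst (snd (midlines_hmeet Q d)))"
  "quad_form (\<lambda>d. snd (snd (midlines_hmeet Q d)))"
  by (cases Q; simp add: midlines_hmeet_def hmeet_def cross_def quad_form_mult_diff lin_form_midline)+

lemma midlines_hmeet_weight: "snd (snd (midlines_hmeet Q d)) = 2 * qinner Q d d"
  by (cases Q) (simp add: midlines_hmeet_def hmeet_def cross_def midline_def line_lin_def qinner_def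
      qalpha_def qbeta_def qgamma_def algebra_simps)

lemma apolar_midlines_hmeet_weight: "apolar Q (\<lambda>d. snd (snd (midlines_hmeet Q d))) = 4 * qdet Q"
  unfolding midlines_hmeet_weight apolar_def qinner_def qdet_def by (simp add: algebra_simps power2_eq_square)

lemma midlines_hmeet_qrot:
  fixes Q :: "('a::field) quad"
  assumes two: "(2::'a) \<noteq> 0" and Q: "quadrilateral Q" and d: "midlines_hmeet Q d = (x, y, w)"
  shows "midlines_hmeet Q (qrot Q d) =
    (qdet Q * (2 * fst (centroid Q) * w - x), qdet Q * (2 * snd (centroid Q) * w - y), qdet Q * w)"
proof -
  have w: "w = 2 * qinner Q d d" using midlines_hmeet_weight[of Q d] d by simp
  have "fst (midlines_hmeet Q (qrot Q d)) = qdet Q * (2 * fst (centroid Q) * w - x)"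
    using quad_form_qrot[OF quad_form_midlines_hmeet(1)[of Q], of Q d] apolar_midlines_hmeet(1)[OF two Q] d w
    by (simp add: algebra_simps)
  moreover have "fst (snd (midlines_hmeet Q (qrot Q d))) = qdet Q * (2 * snd (centroid Q) * w - y)"
    using quad_form_qrot[OF quad_form_midlines_hmeet(2)[of Q], of Q d] apolar_midlines_hmeet(2)[OF two Q] d w
    by (simp add: algebra_simps)
  moreover have "snd (snd (midlines_hmeet Q (qrot Q d))) = qdet Q * w"
    unfolding midlines_hmeet_weight qinner_qrot_self w by simp
  ultimately show ?thesis by (simp add: prod_eq_iff)
qed

lemma centroid_on_midline_isotropic:
  fixes Q :: "('a::field) quad"
  assumes two: "(2::'a) \<noteq> 0" and Q: "quadrilateral Q" and d: "d \<noteq> 0" "qinner Q d d = 0"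
    and zero: "midlines_hmeet Q d = (0, 0, 0)"
    and incid: "\<And>v x y w. midlines_hmeet Q v = (x, y, w) \<Longrightarrow>
      tL (midline L1 L2 v) * x - uL (midline L1 L2 v) * y + vL (midline L1 L2 v) * w = 0"
  shows "on_line (centroid Q) (midline L1 L2 d)"
proof -
  define c where "c = centroid Q"
  let ?M = "midline L1 L2"
  let ?W = "\<lambda>v. fst (midlines_hmeet Q v) - fst c * snd (snd (midlines_hmeet Q v))"
  let ?Z = "\<lambda>v. fst (snd (midlines_hmeet Q v)) - snd c * snd (snd (midlines_hmeet Q v))"
  have "2 * line_eval (?M d) c = 0"
  proof (rule isotropic_cubic_root[OF two qdet_nonzero[OF Q] d, where e = "\<lambda>v. 2 * line_eval (?M v) c"
      and X = "\<lambda>v. tL (?M v)" and Y = "\<lambda>v. - uL (?M v)" and W = ?W and Z = ?Z])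
    show "lin_form (\<lambda>v. 2 * line_eval (?M v) c)" "lin_form (\<lambda>v. tL (?M v))"
      "lin_form (\<lambda>v. - uL (?M v))"
      using lin_form_scale[OF lin_form_midline(4)] lin_form_midline(1)
        lin_form_scale[OF lin_form_midline(2), of "-1"] by simp_all
    show "quad_form ?W" "quad_form ?Z"
      by (intro quad_form_diff_scale quad_form_midlines_hmeet)+
    show "apolar Q ?W = 0" "apolar Q ?Z = 0"
      unfolding apolar_diff_scale apolar_midlines_hmeet[OF two Q] apolar_midlines_hmeet_weight c_def
      by simp_all
    show "?W d = 0" "?Z d = 0" using zero by simp_all
    \<comment> \<open>Incidence of the intersection of the two midlines with this one, expanded around c.\<close>
    fix v
    obtain x y w where xyw: "midlines_hmeet Q v = (x, y, w)" by (cases "midlines_hmeet Q v") auto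
    then have "w = 2 * qinner Q v v" using midlines_hmeet_weight[of Q v] by simp
    then show "qinner Q v v * (2 * line_eval (?M v) c) + tL (?M v) * ?W v + - uL (?M v) * ?Z v = 0"
      using incid[OF xyw] unfolding xyw line_eval_def by (simp add: algebra_simps)
  qed
  then show ?thesis using two by (simp add: on_line_iff_line_eval c_def)
qed

lemma on_midlines_parallel:
  assumes "on_midlines Q d m" "d \<noteq> 0" "det2 d e = 0"
  shows "on_midlines Q e m"
proof -
  obtain A B A' B' where Q_eq: "Q = (A, B, A', B')" by (cases Q) auto
  show ?thesis
    using assms lin_form_det2_zero[OF lin_form_midline(4)[of A A' m], of d e]
      lin_form_det2_zero[OF lin_form_midline(4)[of B B' m], of d e]
    unfolding Q_eq on_midlines_quad on_line_iff_line_eval by simp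
qed

lemma line_eval_reflect: "line_eval L (c + c - m) = 2 * line_eval L c - line_eval L m"
  unfolding line_eval_def by (simp add: algebra_simps)

lemma on_midlines_qrot:
  fixes Q :: "('a::field) quad"
  assumes two: "(2::'a) \<noteq> 0" and Q: "quadrilateral Q" and d: "d \<noteq> 0" and m: "on_midlines Q d m"
  shows "on_midlines Q (qrot Q d) (centroid Q + centroid Q - m)"
proof -
  obtain A B A' B' where Q_eq: "Q = (A, B, A', B')" by (cases Q) auto
  let ?c = "centroid Q" and ?w = "2 * qinner Q d d"
  have "on_line m (midline A A' d)" "on_line m (midline B B' d)"
    using m unfolding Q_eq on_midlines_def by auto
  then have hm: "midlines_hmeet Q d = (?w * fst m, ?w * snd m, ?w)"
    using hmeet_common_point[of m "midline A A' d" "midline B B' d"] midlines_hmeet_weight[of Q d]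
    unfolding Q_eq midlines_hmeet_def by simp
  show ?thesis
  proof (cases "qinner Q d d = 0")
    case False
    let ?k = "qdet Q * ?w"
    have "?k \<noteq> 0" using two False qdet_nonzero[OF Q] by simp
    moreover have "midlines_hmeet Q (qrot Q d) =
        (?k * fst (?c + ?c - m), ?k * snd (?c + ?c - m), ?k)"
      using midlines_hmeet_qrot[OF two Q hm] by (simp add: algebra_simps)
    ultimately show ?thesis
      using on_line_hmeet unfolding Q_eq on_midlines_quad midlines_hmeet_quad by blast
  next
    case True
    have zero: "midlines_hmeet Q d = (0, 0, 0)" using hm True by simp
    have incid:
      "tL (midline A A' v) * x - uL (midline A A' v) * y + vL (midline A A' v) * w = 0"
      "tL (midline B B' v) * x - uL (midline B B' v) * y + vL (midline B B' v) * w = 0"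
      if "midlines_hmeet Q v = (x, y, w)" for v x y w
      using hmeet_incident[of "midline A A' v" "midline B B' v" x y w] that
      unfolding Q_eq midlines_hmeet_quad by simp_all
    have "on_line ?c (midline A A' d)" "on_line ?c (midline B B' d)"
      by (rule centroid_on_midline_isotropic[OF two Q d True zero], erule incid)+
    then have "on_midlines Q d (?c + ?c - m)"
      using m unfolding Q_eq on_midlines_def on_line_iff_line_eval line_eval_reflect by simp
    moreover have "det2 d (qrot Q d) = 0" using True qinner_eq_det2 by metis
    ultimately show ?thesis using on_midlines_parallel d by blast
  qed
qed

section \<open>Q-pairs\<close>

lemma midpt_eq_iff:
  fixes c :: "('a::field) \<times> 'a"
  assumes "(2::'a) \<noteq> 0"
  shows "midpt m p = c \<longleftrightarrow> p = c + c - m"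
  using assms unfolding midpt_def by (auto simp: prod_eq_iff field_simps)

lemma q_orthogonal_iff_det2: "q_orthogonal Q l l' \<longleftrightarrow> det2 (line_dir l') (qrot Q (line_dir l)) = 0"
  unfolding q_orthogonal_def qinner_eq_det2 line_dir_def ..

lemma ex1_line_through_direction:
  assumes "v \<noteq> 0"
  shows "\<exists>!l. is_line l \<and> on_line p l \<and> det2 (line_dir l) v = 0"
proof (rule ex_ex1I)
  show "\<exists>l. is_line l \<and> on_line p l \<and> det2 (line_dir l) v = 0"
  proof (cases "fst v = 0")
    case True
    then show ?thesis
      by (intro exI[of _ "(1, 0, - fst p)"]) (simp add: is_line_def on_line_def line_dir_def det2_def)
  next
    case False
    let ?s = "snd v / fst v"
    show ?thesis
      using False
      by (intro exI[of _ "(?s, 1, snd p - ?s * fst p)"])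
        (simp add: is_line_def on_line_def line_dir_def det2_def field_simps)
  qed
next
  fix l1 l2
  assume "is_line l1 \<and> on_line p l1 \<and> det2 (line_dir l1) v = 0"
    and "is_line l2 \<and> on_line p l2 \<and> det2 (line_dir l2) v = 0"
  moreover then have "parallel l1 l2"
    using det2_trans[of "line_dir l1" v "line_dir l2"] det2_swap[of "line_dir l2" v] assms
    unfolding parallel_iff_det2 by simp
  ultimately show "l1 = l2" using parallel_common_point_eq by blast
qed

lemma Q_pair_iff:
  fixes Q :: "('a::field) quad"
  assumes two: "(2::'a) \<noteq> 0" and Q: "quadrilateral Q" and b: "bisector Q l"
    and m: "bis_mid Q l = Fin m" and l': "is_line l'"
  shows "bisector Q l' \<and> Q_pair Q l l' \<longleftrightarrow>
    on_line (centroid Q + centroid Q - m) l' \<and> det2 (line_dir l') (qrot Q (line_dir l)) = 0"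
proof -
  let ?d = "line_dir l" and ?m' = "centroid Q + centroid Q - m"
  have l: "is_line l" using b unfolding bisector_def by simp
  have "on_midlines Q ?d m" using bisector_midpoint_iff[OF two Q l] b m by blast
  then have orth: "on_midlines Q (qrot Q ?d) ?m'"
    using on_midlines_qrot[OF two Q line_dir_nonzero[OF l]] by blast
  have r: "qrot Q ?d \<noteq> 0" using qrot_nonzero[OF qdet_nonzero[OF Q] line_dir_nonzero[OF l]] .
  have "on_midlines Q (line_dir l') ?m'" if "det2 (line_dir l') (qrot Q ?d) = 0"
    using on_midlines_parallel[OF orth r] det2_swap[of "line_dir l'" "qrot Q ?d"] that by simp
  moreover have "bisector Q l' \<and> Q_pair Q l l' \<longleftrightarrow>
      bisector Q l' \<and> bis_mid Q l' = Fin ?m' \<and> det2 (line_dir l') (qrot Q ?d) = 0"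
    using b m unfolding Q_pair_def q_orthogonal_iff_det2
    by (simp add: midpt_eq_iff[OF two] del: split_paired_Ex)
  ultimately show ?thesis
    using bisector_midpoint_iff[OF two Q l'] by blast
qed

theorem corollary6p7:
  fixes Q :: "('a::field) quad" and l :: "'a line"
  assumes "(2::'a) \<noteq> 0"
    and "quadrilateral Q"
    and "bisector Q l"
  shows "\<exists>!l'. is_line l' \<and> bisector Q l' \<and> Q_pair Q l l'"
proof -
  have l: "is_line l" using assms(3) unfolding bisector_def by simp
  obtain m where m: "bis_mid Q l = Fin m" using bisector_midpoint_exists assms(2,3) by blast
  have "qrot Q (line_dir l) \<noteq> 0"
    using qrot_nonzero[OF qdet_nonzero[OF assms(2)] line_dir_nonzero[OF l]] .
  moreover have "is_line l' \<and> bisector Q l' \<and> Q_pair Q l l' \<longleftrightarrow>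
      is_line l' \<and> on_line (centroid Q + centroid Q - m) l' \<and> det2 (line_dir l') (qrot Q (line_dir l)) = 0"
    for l'
    using Q_pair_iff[OF assms m, of l'] by blast
  ultimately show ?thesis
    using ex1_line_through_direction[of "qrot Q (line_dir l)" "centroid Q + centroid Q - m"] by simp
qed

end
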